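(* Let $d\ge1$, $\alpha>0$, $n\in\mathbb N$. There exists a constant $c<\infty$ depending only on $n,\alpha,d$ such that for every $\ell\in\mathbb N$, $$\sum{}^{*}\ e^{-|u_1-v_1|^\alpha-|u_2-v_2|^\alpha-\cdots-|u_{2n}-v_{2n}|^\alpha}\le c\,\ell^{nd},$$ where $\sum^*$ runs over all $(u_1,\dots,u_{2n},v_1,\dots,v_{2n})\in([-\ell,\ell]^d\cap\mathbb Z^d)^{4n}$ such that for each $i\in\{1,\dots,2n\}$ there exists $j\in\{1,\dots,2n\}$, $j\ne i$, with $\{u_i,v_i\}\cap\{u_j,v_j\}\ne\emptyset$.
   Context: $|\cdot|$ denotes the Euclidean norm. *)

theory Defs
  imports "HOL-Analysis.Analysis"
begin

definition lattice_box :: "nat \<Rightarrow> (real^'d) set" where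
  "lattice_box l = {x. \<forall>i. x $ i \<in> \<int> \<and> \<bar>x $ i\<bar> \<le> real l}"

end

theory Submission
  imports Defs "HOL-Real_Asymp.Real_Asymp"
begin

(* Write f (a, b) = exp (- |a - b|^alpha) on the lattice box B = [-l, l]^d. Since
   |z|^alpha >= (1/d) * (sum over i of |z_i|^alpha), every row and column sum of f is at most
   S = (2 * (sum over k of exp (- k^alpha / d)))^d, independently of l.
   Now sum out the pairs (u_i, v_i) one at a time, keeping track of the set Q of points fixed
   so far. A pair meeting Q costs at most 2 |Q| S. A pair meeting nothing fixed costs at most
   |B| S, but then the linking condition forces a partner pair through one of its two points,
   which costs at most 4 S. So every factor |B| is shared by at least two pairs, and the sum
   over 2n pairs is at most a constant times |B|^n = (2l + 1)^(nd). *)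

section \<open>Families of linked pairs\<close>

lemma sum_PiE_insert:
  assumes "i \<notin> I"
  shows "(\<Sum>x\<in>PiE (insert i I) A. h x) = (\<Sum>p\<in>A i. \<Sum>y\<in>PiE I A. h (y(i := p)))"
proof -
  have "(\<Sum>x\<in>PiE (insert i I) A. h x) = (\<Sum>(p, y)\<in>A i \<times> PiE I A. h (y(i := p)))"
    unfolding PiE_insert_eq
    by (subst sum.reindex[OF inj_combinator[OF assms]]) (simp add: case_prod_unfold)
  then show ?thesis
    by (simp add: sum.cartesian_product)
qed

lemma sum_PiE_insert_prod:
  fixes f :: "'a \<Rightarrow> 'b :: comm_semiring_1"
  assumes "i \<notin> I" "finite I"
  shows "(\<Sum>x\<in>PiE (insert i I) (\<lambda>_. A). if C (x i) x then \<Prod>k\<in>insert i I. f (x k) else 0)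
       = (\<Sum>p\<in>A. f p * (\<Sum>y\<in>PiE I (\<lambda>_. A). if C p (y(i := p)) then \<Prod>k\<in>I. f (y k) else 0))"
proof -
  have prod_upd: "(\<Prod>k\<in>insert i I. f ((y(i := p)) k)) = f p * (\<Prod>k\<in>I. f (y k))" for y p
  proof -
    have "(\<Prod>k\<in>I. f ((y(i := p)) k)) = (\<Prod>k\<in>I. f (y k))"
      using assms(1) by (intro prod.cong) auto
    then show ?thesis
      using assms by simp
  qed
  show ?thesis
    unfolding sum_PiE_insert[OF assms(1)] prod_upd fun_upd_same sum_distrib_left
    by (intro sum.cong refl) simp
qed

definition ends :: "'a \<times> 'a \<Rightarrow> 'a set" where
  "ends p = {fst p, snd p}"

lemma finite_ends [simp]: "finite (ends p)"
  by (simp add: ends_def)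

lemma card_ends_le: "card (ends p) \<le> 2"
  by (simp add: ends_def card_insert_le_m1)

(* Q is the set of points fixed by pairs that have already been summed out. *)
definition linked :: "'i set \<Rightarrow> 'a set \<Rightarrow> ('i \<Rightarrow> 'a \<times> 'a) \<Rightarrow> bool" where
  "linked I Q x \<longleftrightarrow>
     (\<forall>k\<in>I. ends (x k) \<inter> Q \<noteq> {} \<or> (\<exists>j\<in>I. j \<noteq> k \<and> ends (x k) \<inter> ends (x j) \<noteq> {}))"

lemma linked_remove:
  assumes "linked I Q x" "i \<in> I"
  shows "linked (I - {i}) (Q \<union> ends (x i)) x"
  using assms unfolding linked_def by blast

lemma linked_fun_upd: "i \<notin> I \<Longrightarrow> linked I Q (x(i := p)) = linked I Q x"
  unfolding linked_def by (intro ball_cong refl) auto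

lemma linked_insertE:
  assumes "linked (insert i I) Q x" "i \<notin> I"
  obtains "ends (x i) \<inter> Q \<noteq> {}" "linked I (Q \<union> ends (x i)) x"
  | j where "j \<in> I" "ends (x j) \<inter> ends (x i) \<noteq> {}"
      "linked (I - {j}) (Q \<union> ends (x i) \<union> ends (x j)) x"
proof (cases "ends (x i) \<inter> Q \<noteq> {}")
  case True
  with linked_remove[OF assms(1), of i] assms(2) show ?thesis
    using that(1) by simp
next
  case False
  with assms obtain j where "j \<in> I" "ends (x j) \<inter> ends (x i) \<noteq> {}"
    unfolding linked_def by blast
  moreover have "linked (I - {j}) (Q \<union> ends (x i) \<union> ends (x j)) x"
    using linked_remove[OF linked_remove[OF assms(1), of i], of j] assms(2) \<open>j \<in> I\<close>
    by (simp add: insert_Diff_if)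
  ultimately show ?thesis using that(2) by blast
qed

lemma linked_insert_indicator_le:
  fixes g :: real
  assumes "i \<notin> I" "finite I" "g \<ge> 0"
  shows "(if linked (insert i I) Q x then g else 0)
    \<le> (if ends (x i) \<inter> Q \<noteq> {} \<and> linked I (Q \<union> ends (x i)) x then g else 0)
      + (\<Sum>j\<in>I. if ends (x j) \<inter> ends (x i) \<noteq> {} \<and> linked (I - {j}) (Q \<union> ends (x i) \<union> ends (x j)) x
                 then g else 0)"
    (is "_ \<le> _ + (\<Sum>j\<in>I. if ?partnered j then g else 0)")
proof -
  have partners_nonneg: "0 \<le> (\<Sum>j\<in>I. if ?partnered j then g else 0)"
    using assms(3) by (intro sum_nonneg) simp
  show ?thesis
  proof (cases "linked (insert i I) Q x")
    case True
    then show ?thesis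
    proof (rule linked_insertE[OF _ assms(1)])
      assume "ends (x i) \<inter> Q \<noteq> {}" "linked I (Q \<union> ends (x i)) x"
      with partners_nonneg True show ?thesis
        by simp
    next
      fix j
      assume "j \<in> I" "ends (x j) \<inter> ends (x i) \<noteq> {}"
        "linked (I - {j}) (Q \<union> ends (x i) \<union> ends (x j)) x"
      then have "g \<le> (\<Sum>j\<in>I. if ?partnered j then g else 0)"
        using member_le_sum[of j I "\<lambda>j. if ?partnered j then g else 0"] assms by simp
      with True assms(3) show ?thesis
        by simp
    qed
  next
    case False
    with partners_nonneg assms(3) show ?thesis
      by simp
  qed
qed

definition linked_weight :: "'a set \<Rightarrow> ('a \<times> 'a \<Rightarrow> real) \<Rightarrow> 'i set \<Rightarrow> 'a set \<Rightarrow> real" where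
  "linked_weight B f I Q =
     (\<Sum>x\<in>PiE I (\<lambda>_. B \<times> B). if linked I Q x then \<Prod>k\<in>I. f (x k) else 0)"

lemma linked_weight_empty [simp]: "linked_weight B f {} Q = 1"
  by (simp add: linked_weight_def linked_def)

definition linked_bound :: "real \<Rightarrow> real \<Rightarrow> nat \<Rightarrow> nat \<Rightarrow> real" where
  "linked_bound S N q m = real (2 * q + 4 * m) ^ m * S ^ m * N ^ (m div 2)"

lemma linked_bound_mono:
  assumes "q \<le> q'" "S \<ge> 0" "N \<ge> 0"
  shows "linked_bound S N q m \<le> linked_bound S N q' m"
  unfolding linked_bound_def using assms by (intro mult_right_mono power_mono) auto

lemma linked_bound_step:
  fixes N S :: real
  assumes "N \<ge> 1" "S \<ge> 0"
  shows "2 * real q * S * linked_bound S N (q + 2) m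
           + real m * (N * S * (4 * S * linked_bound S N (q + 4) (m - 1)))
         \<le> linked_bound S N q (Suc m)"
proof (cases m)
  case 0
  then show ?thesis
    using assms by (simp add: linked_bound_def mult_right_mono)
next
  case (Suc k)
  \<comment> \<open>both branches share the base A, as 2(q + 2) + 4m = 2(q + 4) + 4(m - 1) = 2q + 4(m + 1)\<close>
  define A where "A = real (2 * q + 4 * Suc m)"
  define X where "X = A ^ k * S ^ Suc (Suc k) * N ^ Suc (k div 2)"
  have X_nonneg: "X \<ge> 0"
    using assms by (simp add: X_def A_def)
  have "N ^ (Suc k div 2) \<le> N ^ Suc (k div 2)"
    using assms(1) by (intro power_increasing) auto
  then have "A ^ m * S ^ m * N ^ (Suc k div 2) \<le> A ^ m * S ^ m * N ^ Suc (k div 2)"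
    using assms by (intro mult_left_mono) (simp_all add: A_def)
  moreover have "linked_bound S N (q + 2) m = A ^ m * S ^ m * N ^ (Suc k div 2)"
    by (simp add: linked_bound_def A_def Suc add_ac)
  ultimately have "2 * real q * S * linked_bound S N (q + 2) m
      \<le> 2 * real q * S * (A ^ m * S ^ m * N ^ Suc (k div 2))"
    using assms by (intro mult_left_mono) auto
  also have "\<dots> = 2 * real q * A * X"
    unfolding X_def Suc by (simp only: power_Suc mult_ac)
  finally have first: "2 * real q * S * linked_bound S N (q + 2) m \<le> 2 * real q * A * X" .
  have "real m * (N * S * (4 * S * linked_bound S N (q + 4) (m - 1)))
      = real m * (N * S * (4 * S * (A ^ k * S ^ k * N ^ (k div 2))))"
    by (simp add: linked_bound_def A_def Suc add_ac)
  also have "\<dots> = 4 * real m * X"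
    unfolding X_def Suc by (simp only: power_Suc mult_ac)
  finally have second: "real m * (N * S * (4 * S * linked_bound S N (q + 4) (m - 1))) = 4 * real m * X" .
  have "2 * real q * A + 4 * real m \<le> A * A"
    using Suc by (simp add: A_def algebra_simps)
  then have "2 * real q * A * X + 4 * real m * X \<le> A * A * X"
    using X_nonneg by (simp add: distrib_right[symmetric] mult_right_mono)
  also have "A * A * X = linked_bound S N q (Suc m)"
    unfolding linked_bound_def A_def X_def Suc by (simp only: power_Suc mult_ac div2_Suc_Suc)
  finally show ?thesis
    using first second by linarith
qed

locale bounded_kernel =
  fixes B :: "'a set" and f :: "'a \<times> 'a \<Rightarrow> real" and S :: real
  assumes finite_B: "finite B" and B_nonempty: "B \<noteq> {}"
    and f_nonneg: "\<And>p. f p \<ge> 0"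
    and row_sum_le: "\<And>a. a \<in> B \<Longrightarrow> (\<Sum>b\<in>B. f (a, b)) \<le> S"
    and column_sum_le: "\<And>b. b \<in> B \<Longrightarrow> (\<Sum>a\<in>B. f (a, b)) \<le> S"
begin

lemma S_nonneg: "S \<ge> 0"
proof -
  obtain a where "a \<in> B"
    using B_nonempty by blast
  have "0 \<le> (\<Sum>b\<in>B. f (a, b))"
    by (intro sum_nonneg f_nonneg)
  with row_sum_le[OF \<open>a \<in> B\<close>] show ?thesis
    by linarith
qed

lemma sum_kernel_le: "(\<Sum>p\<in>B \<times> B. f p) \<le> real (card B) * S"
proof -
  have "(\<Sum>p\<in>B \<times> B. f p) = (\<Sum>a\<in>B. \<Sum>b\<in>B. f (a, b))"
    by (simp add: sum.cartesian_product)
  also have "\<dots> \<le> (\<Sum>a\<in>B. S)"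
    by (intro sum_mono row_sum_le)
  finally show ?thesis
    by simp
qed

lemma sum_kernel_meeting_le:
  assumes "finite R"
  shows "(\<Sum>p\<in>B \<times> B. if ends p \<inter> R \<noteq> {} then f p else 0) \<le> 2 * real (card R) * S"
proof -
  have first: "(\<Sum>p\<in>B \<times> B. if fst p \<in> R then f p else 0) = (\<Sum>a\<in>B \<inter> R. \<Sum>b\<in>B. f (a, b))"
  proof -
    have "{p \<in> B \<times> B. fst p \<in> R} = (B \<inter> R) \<times> B"
      by auto
    then show ?thesis
      using finite_B by (simp add: sum.inter_filter[symmetric] sum.cartesian_product)
  qed
  have second: "(\<Sum>p\<in>B \<times> B. if snd p \<in> R then f p else 0) = (\<Sum>b\<in>B \<inter> R. \<Sum>a\<in>B. f (a, b))"
  proof -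
    have "{p \<in> B \<times> B. snd p \<in> R} = B \<times> (B \<inter> R)"
      by auto
    then have "(\<Sum>p\<in>B \<times> B. if snd p \<in> R then f p else 0) = (\<Sum>a\<in>B. \<Sum>b\<in>B \<inter> R. f (a, b))"
      using finite_B by (simp add: sum.inter_filter[symmetric] sum.cartesian_product)
    then show ?thesis
      by (simp add: sum.swap[of _ B])
  qed
  have "(\<Sum>p\<in>B \<times> B. if ends p \<inter> R \<noteq> {} then f p else 0)
      \<le> (\<Sum>p\<in>B \<times> B. (if fst p \<in> R then f p else 0) + (if snd p \<in> R then f p else 0))"
    by (intro sum_mono) (auto simp: ends_def f_nonneg)
  also have "\<dots> = (\<Sum>a\<in>B \<inter> R. \<Sum>b\<in>B. f (a, b)) + (\<Sum>b\<in>B \<inter> R. \<Sum>a\<in>B. f (a, b))"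
    by (simp only: sum.distrib first second)
  also have "\<dots> \<le> (\<Sum>a\<in>B \<inter> R. S) + (\<Sum>b\<in>B \<inter> R. S)"
    by (intro add_mono sum_mono row_sum_le column_sum_le) auto
  also have "\<dots> = 2 * real (card (B \<inter> R)) * S"
    by simp
  also have "\<dots> \<le> 2 * real (card R) * S"
    using card_mono[OF assms, of "B \<inter> R"] S_nonneg by (intro mult_right_mono) auto
  finally show ?thesis .
qed

lemma linked_weight_nonneg: "linked_weight B f I Q \<ge> 0"
  unfolding linked_weight_def by (intro sum_nonneg) (simp add: prod_nonneg f_nonneg)

lemma anchored_weight_le:
  assumes "i \<notin> I" "finite I" "finite R"
    and bound: "\<And>p. linked_weight B f I (Q \<union> ends p) \<le> K"
  shows "(\<Sum>x\<in>PiE (insert i I) (\<lambda>_. B \<times> B).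
            if ends (x i) \<inter> R \<noteq> {} \<and> linked I (Q \<union> ends (x i)) x
            then \<Prod>k\<in>insert i I. f (x k) else 0)
         \<le> 2 * real (card R) * S * K"
proof -
  have K_nonneg: "K \<ge> 0"
    using linked_weight_nonneg bound by (rule order.trans)
  have "(\<Sum>x\<in>PiE (insert i I) (\<lambda>_. B \<times> B).
            if ends (x i) \<inter> R \<noteq> {} \<and> linked I (Q \<union> ends (x i)) x
            then \<Prod>k\<in>insert i I. f (x k) else 0)
      = (\<Sum>p\<in>B \<times> B. f p * (\<Sum>y\<in>PiE I (\<lambda>_. B \<times> B).
            if ends p \<inter> R \<noteq> {} \<and> linked I (Q \<union> ends p) (y(i := p))
            then \<Prod>k\<in>I. f (y k) else 0))"
    by (rule sum_PiE_insert_prod[OF assms(1,2)])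
  also have "\<dots> = (\<Sum>p\<in>B \<times> B.
      f p * (if ends p \<inter> R \<noteq> {} then linked_weight B f I (Q \<union> ends p) else 0))"
    by (intro sum.cong refl) (simp add: linked_weight_def linked_fun_upd[OF assms(1)])
  also have "\<dots> \<le> (\<Sum>p\<in>B \<times> B. (if ends p \<inter> R \<noteq> {} then f p else 0) * K)"
    by (intro sum_mono) (simp add: mult.commute[of K] mult_left_mono[OF bound f_nonneg])
  also have "\<dots> = (\<Sum>p\<in>B \<times> B. if ends p \<inter> R \<noteq> {} then f p else 0) * K"
    by (simp add: sum_distrib_right)
  also have "\<dots> \<le> 2 * real (card R) * S * K"
    by (intro mult_right_mono sum_kernel_meeting_le assms K_nonneg)
  finally show ?thesis .
qed

lemma partnered_weight_le:
  assumes "i \<notin> I" "j \<in> I" "finite I"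
    and bound: "\<And>p p'. linked_weight B f (I - {j}) (Q \<union> ends p \<union> ends p') \<le> K"
  shows "(\<Sum>x\<in>PiE (insert i I) (\<lambda>_. B \<times> B).
            if ends (x j) \<inter> ends (x i) \<noteq> {} \<and> linked (I - {j}) (Q \<union> ends (x i) \<union> ends (x j)) x
            then \<Prod>k\<in>insert i I. f (x k) else 0)
         \<le> real (card B) * S * (4 * S * K)"
proof -
  have K_nonneg: "K \<ge> 0"
    using linked_weight_nonneg bound by (rule order.trans)
  have I: "I = insert j (I - {j})" "j \<notin> I - {j}" "finite (I - {j})" "i \<notin> I - {j}" "j \<noteq> i"
    using assms by auto
  have partner: "(\<Sum>y\<in>PiE I (\<lambda>_. B \<times> B).
            if ends (y j) \<inter> ends p \<noteq> {} \<and> linked (I - {j}) (Q \<union> ends p \<union> ends (y j)) y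
            then \<Prod>k\<in>I. f (y k) else 0) \<le> 4 * S * K" for p
  proof -
    have "(\<Sum>y\<in>PiE I (\<lambda>_. B \<times> B).
            if ends (y j) \<inter> ends p \<noteq> {} \<and> linked (I - {j}) (Q \<union> ends p \<union> ends (y j)) y
            then \<Prod>k\<in>I. f (y k) else 0) \<le> 2 * real (card (ends p)) * S * K"
      using anchored_weight_le[OF I(2,3) finite_ends, of "Q \<union> ends p" K] bound
      unfolding insert_Diff[OF assms(2)] by blast
    also have "\<dots> \<le> 4 * S * K"
      using card_ends_le[of p] S_nonneg K_nonneg by (intro mult_right_mono) auto
    finally show ?thesis .
  qed
  have "(\<Sum>x\<in>PiE (insert i I) (\<lambda>_. B \<times> B).
            if ends (x j) \<inter> ends (x i) \<noteq> {} \<and> linked (I - {j}) (Q \<union> ends (x i) \<union> ends (x j)) x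
            then \<Prod>k\<in>insert i I. f (x k) else 0)
      = (\<Sum>p\<in>B \<times> B. f p * (\<Sum>y\<in>PiE I (\<lambda>_. B \<times> B).
            if ends (y j) \<inter> ends p \<noteq> {} \<and> linked (I - {j}) (Q \<union> ends p \<union> ends (y j)) y
            then \<Prod>k\<in>I. f (y k) else 0))"
    using sum_PiE_insert_prod[OF assms(1,3), where A = "B \<times> B" and f = f and
        C = "\<lambda>p x. ends (x j) \<inter> ends p \<noteq> {} \<and> linked (I - {j}) (Q \<union> ends p \<union> ends (x j)) x"]
    by (simp add: linked_fun_upd[OF I(4)] I(5))
  also have "\<dots> \<le> (\<Sum>p\<in>B \<times> B. f p * (4 * S * K))"
    by (intro sum_mono mult_left_mono partner f_nonneg)
  also have "\<dots> = (\<Sum>p\<in>B \<times> B. f p) * (4 * S * K)"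
    by (simp add: sum_distrib_right)
  also have "\<dots> \<le> real (card B) * S * (4 * S * K)"
    using S_nonneg K_nonneg by (intro mult_right_mono sum_kernel_le) auto
  finally show ?thesis .
qed

lemma linked_weight_insert_le:
  assumes "i \<notin> I" "finite I" "finite Q"
    and anchored_le: "\<And>p. linked_weight B f I (Q \<union> ends p) \<le> KA"
    and partnered_le: "\<And>j p p'. j \<in> I \<Longrightarrow> linked_weight B f (I - {j}) (Q \<union> ends p \<union> ends p') \<le> KB"
  shows "linked_weight B f (insert i I) Q
           \<le> 2 * real (card Q) * S * KA + real (card I) * (real (card B) * S * (4 * S * KB))"
proof -
  define g where "g x = (\<Prod>k\<in>insert i I. f (x k))" for x
  define anchored where "anchored x \<longleftrightarrow> ends (x i) \<inter> Q \<noteq> {} \<and> linked I (Q \<union> ends (x i)) x" for x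
  define partnered where "partnered j x \<longleftrightarrow>
      ends (x j) \<inter> ends (x i) \<noteq> {} \<and> linked (I - {j}) (Q \<union> ends (x i) \<union> ends (x j)) x" for j x
  have g_nonneg: "g x \<ge> 0" for x
    unfolding g_def by (intro prod_nonneg f_nonneg)
  let ?P = "PiE (insert i I) (\<lambda>_. B \<times> B)"
  have "linked_weight B f (insert i I) Q
      \<le> (\<Sum>x\<in>?P. (if anchored x then g x else 0) + (\<Sum>j\<in>I. if partnered j x then g x else 0))"
    unfolding linked_weight_def g_def[symmetric] anchored_def partnered_def
    by (intro sum_mono linked_insert_indicator_le assms(1,2) g_nonneg)
  also have "\<dots> = (\<Sum>x\<in>?P. if anchored x then g x else 0)
                   + (\<Sum>j\<in>I. \<Sum>x\<in>?P. if partnered j x then g x else 0)"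
    by (simp only: sum.distrib sum.swap[of _ ?P])
  also have "\<dots> \<le> 2 * real (card Q) * S * KA + (\<Sum>j\<in>I. real (card B) * S * (4 * S * KB))"
    unfolding anchored_def partnered_def g_def
    by (intro add_mono sum_mono anchored_weight_le partnered_weight_le assms partnered_le)
  finally show ?thesis
    by simp
qed

lemma linked_weight_le:
  assumes "finite I" "finite Q"
  shows "linked_weight B f I Q \<le> linked_bound S (card B) (card Q) (card I)"
  using assms
proof (induction "card I" arbitrary: I Q rule: less_induct)
  case less
  have N_ge_1: "real (card B) \<ge> 1"
    using finite_B B_nonempty by (simp add: Suc_le_eq card_gt_0_iff)
  show ?case
  proof (cases "I = {}")
    case True
    then show ?thesis
      by (simp add: linked_bound_def)
  next
    case False
    then obtain i I' where I: "I = insert i I'" "i \<notin> I'"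
      by (metis Set.set_insert ex_in_conv)
    have fin: "finite I'"
      using less.prems(1) I(1) by simp
    have IH: "linked_weight B f J Q' \<le> linked_bound S (card B) q' (card J)"
      if "J \<subseteq> I'" "finite Q'" "card Q' \<le> q'" for J Q' q'
    proof -
      have "card J < card I"
        using card_mono[OF fin that(1)] I fin by simp
      then have "linked_weight B f J Q' \<le> linked_bound S (card B) (card Q') (card J)"
        using less.hyps finite_subset[OF that(1) fin] that(2) by blast
      also have "\<dots> \<le> linked_bound S (card B) q' (card J)"
        using that(3) S_nonneg by (intro linked_bound_mono) auto
      finally show ?thesis .
    qed
    have "linked_weight B f I' (Q \<union> ends p) \<le> linked_bound S (card B) (card Q + 2) (card I')" for p
      using IH[of I' "Q \<union> ends p"] less.prems(2) card_Un_le[of Q "ends p"] card_ends_le[of p]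
      by simp
    moreover have "linked_weight B f (I' - {j}) (Q \<union> ends p \<union> ends p')
        \<le> linked_bound S (card B) (card Q + 4) (card I' - 1)" if "j \<in> I'" for j p p'
      using IH[of "I' - {j}" "Q \<union> ends p \<union> ends p'"] less.prems(2) that fin
        card_Un_le[of "Q \<union> ends p" "ends p'"] card_Un_le[of Q "ends p"]
        card_ends_le[of p] card_ends_le[of p']
      by simp
    ultimately have "linked_weight B f I Q
        \<le> 2 * real (card Q) * S * linked_bound S (card B) (card Q + 2) (card I')
          + real (card I') * (real (card B) * S * (4 * S * linked_bound S (card B) (card Q + 4) (card I' - 1)))"
      unfolding I(1) by (rule linked_weight_insert_le[OF I(2) fin less.prems(2)])
    also have "\<dots> \<le> linked_bound S (card B) (card Q) (Suc (card I'))"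
      by (rule linked_bound_step[OF N_ge_1 S_nonneg])
    finally show ?thesis
      using I fin by simp
  qed
qed

end

lemma bij_betw_PiE_unzip:
  "bij_betw (\<lambda>x. (\<lambda>k\<in>I. fst (x k), \<lambda>k\<in>I. snd (x k)))
     (PiE I (\<lambda>_. A \<times> B)) (PiE I (\<lambda>_. A) \<times> PiE I (\<lambda>_. B))"
  by (rule bij_betwI[where g = "\<lambda>(u, v). \<lambda>k\<in>I. (u k, v k)"])
    (auto simp: PiE_iff extensional_def fun_eq_iff mem_Times_iff)

lemma sum_linked_pairs_eq_linked_weight:
  fixes w :: "'a \<Rightarrow> 'a \<Rightarrow> real" and M :: "'i set"
  assumes "finite B" "finite M"
  shows "(\<Sum>(u, v) \<in> {(u, v). u \<in> PiE M (\<lambda>_. B) \<and> v \<in> PiE M (\<lambda>_. B)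
            \<and> (\<forall>i\<in>M. \<exists>j\<in>M. j \<noteq> i \<and> {u i, v i} \<inter> {u j, v j} \<noteq> {})}.
           exp (- (\<Sum>i\<in>M. w (u i) (v i))))
       = linked_weight B (\<lambda>p. exp (- w (fst p) (snd p))) M {}"
    (is "?sum = _")
proof -
  define linked_pair :: "('i \<Rightarrow> 'a) \<times> ('i \<Rightarrow> 'a) \<Rightarrow> bool" where
    "linked_pair = (\<lambda>(u, v). \<forall>i\<in>M. \<exists>j\<in>M. j \<noteq> i \<and> {u i, v i} \<inter> {u j, v j} \<noteq> {})"
  define G where "G = (\<lambda>(u, v). exp (- (\<Sum>i\<in>M. w (u i) (v i))))"
  have "?sum = sum G {uv \<in> PiE M (\<lambda>_. B) \<times> PiE M (\<lambda>_. B). linked_pair uv}"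
    unfolding G_def by (intro sum.cong) (auto simp: linked_pair_def)
  also have "\<dots> = (\<Sum>uv\<in>PiE M (\<lambda>_. B) \<times> PiE M (\<lambda>_. B). if linked_pair uv then G uv else 0)"
    using assms by (simp add: sum.inter_filter finite_PiE)
  also have "\<dots> = (\<Sum>x\<in>PiE M (\<lambda>_. B \<times> B).
      if linked_pair (\<lambda>k\<in>M. fst (x k), \<lambda>k\<in>M. snd (x k))
      then G (\<lambda>k\<in>M. fst (x k), \<lambda>k\<in>M. snd (x k)) else 0)"
    by (rule sum.reindex_bij_betw[symmetric, OF bij_betw_PiE_unzip])
  also have "\<dots> = linked_weight B (\<lambda>p. exp (- w (fst p) (snd p))) M {}"
    unfolding linked_weight_def using assms(2)
    by (intro sum.cong refl) (simp add: linked_pair_def G_def linked_def ends_def exp_sum sum_negf[symmetric])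
  finally show ?thesis .
qed

section \<open>The exponential kernel on lattice boxes\<close>

definition integer_segment :: "nat \<Rightarrow> real set" where
  "integer_segment l = {t. t \<in> \<int> \<and> \<bar>t\<bar> \<le> real l}"

lemma integer_segment_eq: "integer_segment l = real_of_int ` {-int l..int l}"
proof
  show "integer_segment l \<subseteq> real_of_int ` {-int l..int l}"
  proof
    fix t assume "t \<in> integer_segment l"
    then obtain k where k: "t = real_of_int k" "\<bar>real_of_int k\<bar> \<le> real l"
      unfolding integer_segment_def by (auto elim: Ints_cases)
    then have "\<bar>k\<bar> \<le> int l"
      by (metis of_int_abs of_int_le_iff of_int_of_nat_eq)
    with k(1) show "t \<in> real_of_int ` {-int l..int l}"
      by (simp add: abs_le_iff)
  qed
qed (auto simp: integer_segment_def)

lemma finite_integer_segment: "finite (integer_segment l)"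
  by (simp add: integer_segment_eq)

lemma card_integer_segment: "card (integer_segment l) = 2 * l + 1"
  unfolding integer_segment_eq by (subst card_image) (auto simp: inj_on_def)

lemma lattice_box_eq: "lattice_box l = vec_lambda ` PiE UNIV (\<lambda>_. integer_segment l)"
proof
  show "lattice_box l \<subseteq> vec_lambda ` PiE UNIV (\<lambda>_. integer_segment l)"
  proof
    fix x :: "real^'d" assume "x \<in> lattice_box l"
    then have "vec_nth x \<in> PiE UNIV (\<lambda>_. integer_segment l)"
      by (simp add: lattice_box_def integer_segment_def PiE_iff)
    then show "x \<in> vec_lambda ` PiE UNIV (\<lambda>_. integer_segment l)"
      by (rule rev_image_eqI) simp
  qed
qed (auto simp: lattice_box_def integer_segment_def)

lemma inj_vec_lambda: "inj vec_lambda"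
  by (simp add: inj_def)

lemma finite_lattice_box: "finite (lattice_box l)"
  unfolding lattice_box_eq by (simp add: finite_PiE finite_integer_segment)

lemma card_lattice_box: "card (lattice_box l :: (real^'d) set) = (2 * l + 1) ^ CARD('d)"
  unfolding lattice_box_eq
  by (simp add: card_image inj_on_subset[OF inj_vec_lambda] card_PiE card_integer_segment)

lemma zero_in_lattice_box: "0 \<in> lattice_box l"
  by (simp add: lattice_box_def)

lemma diff_in_lattice_box:
  assumes "x \<in> lattice_box l" "y \<in> lattice_box l"
  shows "x - y \<in> lattice_box (2 * l)"
proof -
  have "x $ i - y $ i \<in> \<int> \<and> \<bar>x $ i - y $ i\<bar> \<le> real (2 * l)" for i
  proof -
    have "x $ i \<in> \<int>" "y $ i \<in> \<int>" "\<bar>x $ i\<bar> \<le> real l" "\<bar>y $ i\<bar> \<le> real l"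
      using assms by (simp_all add: lattice_box_def)
    then show ?thesis
      using abs_triangle_ineq4[of "x $ i" "y $ i"] by auto
  qed
  then show ?thesis
    by (simp add: lattice_box_def)
qed

lemma card_lattice_box_power_le:
  assumes "l \<ge> 1"
  shows "real (card (lattice_box l :: (real^'d) set)) ^ k
           \<le> 3 ^ (k * CARD('d)) * real l ^ (k * CARD('d))"
proof -
  have "real (2 * l + 1) \<le> 3 * real l"
    using assms by simp
  then have "real (2 * l + 1) ^ (k * CARD('d)) \<le> (3 * real l) ^ (k * CARD('d))"
    by (rule power_mono) simp
  then show ?thesis
    by (simp add: card_lattice_box power_mult_distrib mult.commute[of k] power_mult)
qed

lemma summable_exp_neg_powr:
  fixes a D :: real
  assumes "a > 0" "D > 0"
  shows "summable (\<lambda>k::nat. exp (- (real k powr a) / D))"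
proof (rule summable_comparison_test_ev[OF _ inverse_power_summable[of 2]])
  have "((\<lambda>k::nat. real k ^ 2 * exp (- (real k powr a) / D)) \<longlongrightarrow> 0) at_top"
    using assms by real_asymp
  then have "eventually (\<lambda>k::nat. real k ^ 2 * exp (- (real k powr a) / D) < 1) at_top"
    by (rule order_tendstoD) simp
  then show "eventually (\<lambda>k. norm (exp (- (real k powr a) / D)) \<le> inverse (real k ^ 2)) at_top"
    using eventually_gt_at_top[of "0::nat"]
    by eventually_elim (simp add: field_simps)
qed simp

lemma sum_symmetric_le_suminf:
  fixes g :: "nat \<Rightarrow> real"
  assumes "summable g" "\<And>k. g k \<ge> 0"
  shows "(\<Sum>k\<in>{-int L..int L}. g (nat \<bar>k\<bar>)) \<le> 2 * suminf g"
proof -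
  have "(\<Sum>k\<in>{-int L..int L}. g (nat \<bar>k\<bar>)) \<le> 2 * (\<Sum>k<Suc L. g k)"
  proof (induction L)
    case 0
    then show ?case
      using assms(2)[of 0] by simp
  next
    case (Suc L)
    have "{-int (Suc L)..int (Suc L)} = insert (- int (Suc L)) (insert (int (Suc L)) {-int L..int L})"
      by auto
    then have "(\<Sum>k\<in>{-int (Suc L)..int (Suc L)}. g (nat \<bar>k\<bar>))
        = 2 * g (Suc L) + (\<Sum>k\<in>{-int L..int L}. g (nat \<bar>k\<bar>))"
      by (simp del: of_nat_Suc)
    with Suc.IH show ?case
      by simp
  qed
  also have "\<dots> \<le> 2 * suminf g"
    using sum_le_suminf[OF assms(1), of "{..<Suc L}"] assms(2) by simp
  finally show ?thesis .
qed

lemma exp_neg_norm_powr_le_prod: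
  fixes z :: "real^'d" and a :: real
  assumes "a \<ge> 0"
  shows "exp (- (norm z powr a)) \<le> (\<Prod>i\<in>UNIV. exp (- (\<bar>z $ i\<bar> powr a) / real CARD('d)))"
proof -
  have "(\<Sum>i\<in>UNIV. \<bar>z $ i\<bar> powr a) \<le> (\<Sum>i\<in>(UNIV::'d set). norm z powr a)"
    by (intro sum_mono powr_mono2 assms component_le_norm_cart) auto
  then have "(\<Sum>i\<in>UNIV. \<bar>z $ i\<bar> powr a) / real CARD('d) \<le> norm z powr a"
    by (simp add: field_simps)
  then show ?thesis
    by (simp add: exp_sum[symmetric] sum_negf sum_divide_distrib)
qed

definition lattice_exp_bound :: "real \<Rightarrow> nat \<Rightarrow> real" where
  "lattice_exp_bound a d = (2 * (\<Sum>k. exp (- (real k powr a) / real d))) ^ d"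

lemma sum_lattice_box_exp_le:
  fixes a :: real
  assumes "a > 0"
  shows "(\<Sum>z\<in>lattice_box L. exp (- (norm (z :: real^'d) powr a)))
           \<le> lattice_exp_bound a CARD('d)"
proof -
  define g where "g k = exp (- (real k powr a) / real CARD('d))" for k :: nat
  define G where "G t = exp (- (\<bar>t\<bar> powr a) / real CARD('d))" for t :: real
  have segment_le: "(\<Sum>t\<in>integer_segment L. G t) \<le> 2 * suminf g"
  proof -
    have "(\<Sum>t\<in>integer_segment L. G t) = (\<Sum>k\<in>{-int L..int L}. g (nat \<bar>k\<bar>))"
      unfolding integer_segment_eq by (subst sum.reindex) (auto simp: inj_on_def G_def g_def)
    also have "\<dots> \<le> 2 * suminf g"
      using summable_exp_neg_powr[OF assms, of "real CARD('d)"]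
      by (intro sum_symmetric_le_suminf) (simp_all add: g_def)
    finally show ?thesis .
  qed
  have "(\<Sum>z\<in>lattice_box L. exp (- (norm (z :: real^'d) powr a)))
      \<le> (\<Sum>z\<in>lattice_box L. \<Prod>i\<in>UNIV. G ((z :: real^'d) $ i))"
    unfolding G_def by (rule sum_mono, rule exp_neg_norm_powr_le_prod) (use assms in simp)
  also have "\<dots> = (\<Sum>\<phi>\<in>PiE (UNIV :: 'd set) (\<lambda>_. integer_segment L). \<Prod>i\<in>UNIV. G (\<phi> i))"
    unfolding lattice_box_eq by (subst sum.reindex) (simp_all add: inj_on_subset[OF inj_vec_lambda])
  also have "\<dots> = (\<Prod>i\<in>(UNIV::'d set). \<Sum>t\<in>integer_segment L. G t)"
    by (rule prod_sum_PiE[symmetric]) (simp_all add: finite_integer_segment)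
  also have "\<dots> \<le> (\<Prod>i\<in>(UNIV::'d set). 2 * suminf g)"
    by (intro prod_mono conjI sum_nonneg segment_le) (simp add: G_def)
  finally show ?thesis
    by (simp add: lattice_exp_bound_def g_def[abs_def])
qed

lemma sum_lattice_box_exp_dist_le:
  fixes a :: real
  assumes "a > 0" "x \<in> lattice_box l"
  shows "(\<Sum>b\<in>lattice_box l. exp (- (norm (x - b :: real^'d) powr a)))
           \<le> lattice_exp_bound a CARD('d)"
proof -
  have "(\<Sum>b\<in>lattice_box l. exp (- (norm (x - b) powr a)))
      = (\<Sum>z\<in>(\<lambda>b. x - b) ` lattice_box l. exp (- (norm z powr a)))"
    by (subst sum.reindex) (auto simp: inj_on_def)
  also have "\<dots> \<le> (\<Sum>z\<in>lattice_box (2 * l). exp (- (norm (z :: real^'d) powr a)))"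
    by (rule sum_mono2[OF finite_lattice_box]) (use assms(2) diff_in_lattice_box in auto)
  also have "\<dots> \<le> lattice_exp_bound a CARD('d)"
    by (rule sum_lattice_box_exp_le[OF assms(1)])
  finally show ?thesis .
qed

lemma sum_linked_pairs_lattice_le:
  fixes \<alpha> :: real and M :: "'i set"
  assumes "\<alpha> > 0" "finite M" "l \<ge> 1"
  shows "(\<Sum>(u, v) \<in> {(u, v). u \<in> PiE M (\<lambda>_. lattice_box l :: (real^'d) set)
                      \<and> v \<in> PiE M (\<lambda>_. lattice_box l :: (real^'d) set)
                      \<and> (\<forall>i\<in>M. \<exists>j\<in>M. j \<noteq> i \<and> {u i, v i} \<inter> {u j, v j} \<noteq> {})}.
            exp (- (\<Sum>i\<in>M. norm (u i - v i) powr \<alpha>)))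
         \<le> real (4 * card M) ^ card M * lattice_exp_bound \<alpha> CARD('d) ^ card M
             * 3 ^ (card M div 2 * CARD('d)) * real l ^ (card M div 2 * CARD('d))"
    (is "?sum \<le> _")
proof -
  define S where "S = lattice_exp_bound \<alpha> CARD('d)"
  define f where "f p = exp (- (norm (fst p - snd p) powr \<alpha>))" for p :: "(real^'d) \<times> (real^'d)"
  interpret bounded_kernel "lattice_box l :: (real^'d) set" f S
  proof
    show "lattice_box l \<noteq> {}"
      using zero_in_lattice_box by blast
    show "(\<Sum>b\<in>lattice_box l. f (a, b)) \<le> S" if "a \<in> lattice_box l" for a
      using sum_lattice_box_exp_dist_le[OF assms(1) that] by (simp add: f_def S_def)
    show "(\<Sum>a\<in>lattice_box l. f (a, b)) \<le> S" if "b \<in> lattice_box l" for b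
      using sum_lattice_box_exp_dist_le[OF assms(1) that] by (simp add: f_def S_def norm_minus_commute)
  qed (simp_all add: finite_lattice_box f_def)
  have "?sum = linked_weight (lattice_box l) f M {}"
    using sum_linked_pairs_eq_linked_weight[OF finite_lattice_box assms(2),
        of "\<lambda>a b. norm (a - b) powr \<alpha>"]
    by (simp add: f_def[abs_def] case_prod_unfold)
  also have "\<dots> \<le> real (4 * card M) ^ card M * S ^ card M
      * real (card (lattice_box l :: (real^'d) set)) ^ (card M div 2)"
    using linked_weight_le[OF assms(2), of "{}"] by (simp add: linked_bound_def)
  also have "\<dots> \<le> real (4 * card M) ^ card M * S ^ card M
      * (3 ^ (card M div 2 * CARD('d)) * real l ^ (card M div 2 * CARD('d)))"
    using S_nonneg by (intro mult_left_mono card_lattice_box_power_le assms(3)) simp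
  finally show ?thesis
    by (simp add: S_def mult.assoc)
qed

theorem lemmaA2:
  fixes \<alpha> :: real and n :: nat
  assumes "\<alpha> > 0"
  shows "\<exists>c::real. \<forall>l::nat. l \<ge> 1 \<longrightarrow>
    (\<Sum>(u, v) \<in> {(u, v). u \<in> (PiE {1..2*n} (\<lambda>_. (lattice_box l :: (real^'d) set)))
                      \<and> v \<in> (PiE {1..2*n} (\<lambda>_. (lattice_box l :: (real^'d) set)))
                      \<and> (\<forall>i\<in>{1..2*n}. \<exists>j\<in>{1..2*n}. j \<noteq> i \<and> {u i, v i} \<inter> {u j, v j} \<noteq> {})}.
        exp (- (\<Sum>i=1..2*n. norm (u i - v i) powr \<alpha>)))
    \<le> c * real l ^ (n * CARD('d))"
  using sum_linked_pairs_lattice_le[OF assms finite_atLeastAtMost[of 1 "2 * n"], where 'd = 'd]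
  by (intro exI[of _ "real (4 * (2 * n)) ^ (2 * n) * lattice_exp_bound \<alpha> CARD('d) ^ (2 * n)
      * 3 ^ (n * CARD('d))"]) simp

end
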